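(* Let $N$ be a phylogenetic network and consider a valid head move of $(u,v)$ from $(x_1,y_1)$ to $(x_2,y_2)$ resulting in $N'$. Suppose $y_1$ is above $x_2$, $y_1\neq x_2$, and $x_2$ is a split node. Then there is a sequence of at most $4$ valid tail moves transforming $N$ into $N'$.
   Context: A (binary) phylogenetic network on a finite label set $X$ ($|X|\ge 2$) is a directed acyclic graph without parallel edges having exactly one root (indegree 0, outdegree 1), exactly $|X|$ leaves (indegree 1, outdegree 0) bijectively labelled by $X$, and all other nodes are either split nodes (indegree 1, outdegree 2) or reticulations (indegree 2, outdegree 1). A node $a$ is above a node $b$ if there is a directed path from $a$ to $b$. Subdividing an edge $(a,b)$ means replacing it by a new node $x$ and edges $(a,x),(x,b)$; suppressing an indegree-1 outdegree-1 node $x$ with parent $a$ and child $b$ means deleting $x$ and its edges and adding $(a,b)$. Head move of $(u,v)$ ($v$ a reticulation) to an edge $f$: delete $(u,v)$, subdivide $f$ with new node $v'$, suppress $v$, add $(u,v')$; "from $(x_1,y_1)$ to $(x_2,y_2)$" means $x_1$ is the other parent and $y_1$ the child of $v$, and $f=(x_2,y_2)$. Tail move of $(u,v)$ ($u$ a split node) to $f$: delete $(u,v)$, subdivide $f$ with new node $u'$, suppress $u$, add $(u',v)$. A move is valid only if the result is a phylogenetic network. *)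

theory Defs
  imports Main
begin

text \<open>A directed graph is given by a node set V and an edge set E (no parallel edges
  by construction).  Leaves are identified with their labels: the leaf set is X.\<close>

definition indeg :: "'v set \<Rightarrow> ('v \<times> 'v) set \<Rightarrow> 'v \<Rightarrow> nat" where
  "indeg V E x = card {y \<in> V. (y, x) \<in> E}"

definition outdeg :: "'v set \<Rightarrow> ('v \<times> 'v) set \<Rightarrow> 'v \<Rightarrow> nat" where
  "outdeg V E x = card {y \<in> V. (x, y) \<in> E}"

definition is_root :: "'v set \<Rightarrow> ('v \<times> 'v) set \<Rightarrow> 'v \<Rightarrow> bool" where
  "is_root V E x \<longleftrightarrow> x \<in> V \<and> indeg V E x = 0 \<and> outdeg V E x = 1"

definition is_leaf :: "'v set \<Rightarrow> ('v \<times> 'v) set \<Rightarrow> 'v \<Rightarrow> bool" where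
  "is_leaf V E x \<longleftrightarrow> x \<in> V \<and> indeg V E x = 1 \<and> outdeg V E x = 0"

definition is_split :: "'v set \<Rightarrow> ('v \<times> 'v) set \<Rightarrow> 'v \<Rightarrow> bool" where
  "is_split V E x \<longleftrightarrow> x \<in> V \<and> indeg V E x = 1 \<and> outdeg V E x = 2"

definition is_retic :: "'v set \<Rightarrow> ('v \<times> 'v) set \<Rightarrow> 'v \<Rightarrow> bool" where
  "is_retic V E x \<longleftrightarrow> x \<in> V \<and> indeg V E x = 2 \<and> outdeg V E x = 1"

definition phylo_net :: "'v set \<Rightarrow> 'v set \<Rightarrow> ('v \<times> 'v) set \<Rightarrow> bool" where
  "phylo_net X V E \<longleftrightarrow>
     finite V \<and> E \<subseteq> V \<times> V \<and> acyclic E \<and> card X \<ge> 2 \<and>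
     card {x \<in> V. is_root V E x} = 1 \<and>
     {x \<in> V. is_leaf V E x} = X \<and>
     (\<forall>x \<in> V. is_root V E x \<or> is_leaf V E x \<or> is_split V E x \<or> is_retic V E x)"

definition above :: "('v \<times> 'v) set \<Rightarrow> 'v \<Rightarrow> 'v \<Rightarrow> bool" where
  "above E a b \<longleftrightarrow> (a, b) \<in> E\<^sup>*"

definition subdivide :: "('v \<times> 'v) set \<Rightarrow> 'v \<times> 'v \<Rightarrow> 'v \<Rightarrow> ('v \<times> 'v) set" where
  "subdivide E f x = (E - {f}) \<union> {(fst f, x), (x, snd f)}"

definition suppress :: "'v set \<Rightarrow> ('v \<times> 'v) set \<Rightarrow> 'v \<Rightarrow> 'v set \<Rightarrow> ('v \<times> 'v) set \<Rightarrow> bool" where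
  "suppress V E x V' E' \<longleftrightarrow> x \<in> V \<and>
     (\<exists>a b. {y \<in> V. (y, x) \<in> E} = {a} \<and> {y \<in> V. (x, y) \<in> E} = {b} \<and>
            V' = V - {x} \<and> E' = (E - {(a, x), (x, b)}) \<union> {(a, b)})"

definition head_move ::
  "'v set \<Rightarrow> 'v set \<Rightarrow> ('v \<times> 'v) set \<Rightarrow> 'v \<Rightarrow> 'v \<Rightarrow> 'v \<Rightarrow> 'v \<Rightarrow> 'v \<Rightarrow> 'v \<Rightarrow> 'v
   \<Rightarrow> 'v set \<Rightarrow> ('v \<times> 'v) set \<Rightarrow> bool" where
  "head_move X V E u v x1 y1 x2 y2 v' V' E' \<longleftrightarrow>
     phylo_net X V E \<and> (u, v) \<in> E \<and> is_retic V E v \<and>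
     (x1, v) \<in> E \<and> x1 \<noteq> u \<and> (v, y1) \<in> E \<and>
     (x2, y2) \<in> E - {(u, v)} \<and> v' \<notin> V \<and>
     (\<exists>E3. suppress (insert v' V) (subdivide (E - {(u, v)}) (x2, y2) v') v V' E3 \<and>
           E' = insert (u, v') E3) \<and>
     phylo_net X V' E'"

definition tail_move ::
  "'v set \<Rightarrow> 'v set \<Rightarrow> ('v \<times> 'v) set \<Rightarrow> 'v \<Rightarrow> 'v \<Rightarrow> 'v \<Rightarrow> 'v \<Rightarrow> 'v
   \<Rightarrow> 'v set \<Rightarrow> ('v \<times> 'v) set \<Rightarrow> bool" where
  "tail_move X V E u v x2 y2 u' V' E' \<longleftrightarrow>
     phylo_net X V E \<and> (u, v) \<in> E \<and> is_split V E u \<and>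
     (x2, y2) \<in> E - {(u, v)} \<and> u' \<notin> V \<and>
     (\<exists>E3. suppress (insert u' V) (subdivide (E - {(u, v)}) (x2, y2) u') u V' E3 \<and>
           E' = insert (u', v) E3) \<and>
     phylo_net X V' E'"

definition tail_step :: "'v set \<Rightarrow> (('v set \<times> ('v \<times> 'v) set) \<times> ('v set \<times> ('v \<times> 'v) set)) set" where
  "tail_step X = {((V, E), (V', E')). \<exists>u v x2 y2 u'. tail_move X V E u v x2 y2 u' V' E'}"

text \<open>Isomorphism of networks on X (fixing the leaves, i.e. preserving labels).\<close>
definition net_iso :: "'v set \<Rightarrow> 'v set \<times> ('v \<times> 'v) set \<Rightarrow> 'v set \<times> ('v \<times> 'v) set \<Rightarrow> bool" where
  "net_iso X N M \<longleftrightarrow> (\<exists>\<phi>. bij_betw \<phi> (fst N) (fst M) \<and>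
      (\<forall>a \<in> fst N. \<forall>b \<in> fst N. (a, b) \<in> snd N \<longleftrightarrow> (\<phi> a, \<phi> b) \<in> snd M) \<and>
      (\<forall>x \<in> X. \<phi> x = x))"

end

theory Submission
  imports Defs "HOL-Combinatorics.Transposition"
begin

(* Up to renaming the fresh node back to v, the head move turns N into the network Eh obtained by
   replacing the edges (x1, v), (v, y1), (x2, y2) with (x1, y1), (x2, v), (v, y2). Let p2 be the parent
   and z the other child of x2. Without a shortcut edge (p2, z), three tail moves reach Eh: the tail of
   (x2, y2) onto (v, y1), creating s; the tail of (s, y1) onto (x1, v), creating t; the tail of (t, v)
   onto (p2, z), recreating x2. With a shortcut the first move would create a parallel edge. If p2 = y1,
   moving the tail of (y1, z) onto (x1, v) and then that of (x2, z) onto the new edge (x1, t) suffices;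
   otherwise a preliminary move of the tail of (p2, x2) onto (x1, v) breaks the triangle p2, x2, z,
   and three further moves finish. In both cases the result is Eh with t in place of x2. Every intermediate network
   is acyclic because its edges increase a rank extending the ancestor count of N to the fresh nodes;
   consistency of these ranks is where y1 being above x2 is used. *)

definition strict_rank :: "('v \<Rightarrow> nat) \<Rightarrow> ('v \<times> 'v) set \<Rightarrow> bool" where
  "strict_rank r E \<longleftrightarrow> (\<forall>(a, b) \<in> E. r a < r b)"

lemma strict_rankD: "strict_rank r E \<Longrightarrow> (a, b) \<in> E \<Longrightarrow> r a < r b"
  unfolding strict_rank_def by blast

lemma strict_rank_trancl:
  assumes "strict_rank r E" "(a, b) \<in> E\<^sup>+"
  shows "r a < r b"
  using assms(2) by (induction rule: trancl_induct) (use assms(1) in \<open>auto simp: strict_rank_def\<close>)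

lemma strict_rank_rtrancl:
  assumes "strict_rank r E" "(a, b) \<in> E\<^sup>*"
  shows "r a \<le> r b"
  using assms(2) by (induction rule: rtrancl_induct)
    (use assms(1) in \<open>auto simp: strict_rank_def intro: order.strict_trans2\<close>)

lemma strict_rank_acyclic: "strict_rank r E \<Longrightarrow> acyclic E"
  unfolding acyclic_def using strict_rank_trancl[of r E] by (meson less_irrefl)

definition ancestor_count :: "('v \<times> 'v) set \<Rightarrow> 'v \<Rightarrow> nat" where
  "ancestor_count E x = card {y. (y, x) \<in> E\<^sup>+}"

lemma strict_rank_ancestor_count:
  assumes "finite V" "E \<subseteq> V \<times> V" "acyclic E"
  shows "strict_rank (ancestor_count E) E"
  unfolding strict_rank_def
proof clarify
  fix a b assume ab: "(a, b) \<in> E"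
  have "{y. (y, a) \<in> E\<^sup>+} \<subset> {y. (y, b) \<in> E\<^sup>+}"
  proof
    show "{y. (y, a) \<in> E\<^sup>+} \<subseteq> {y. (y, b) \<in> E\<^sup>+}"
      using ab by (auto intro: trancl_into_trancl)
    have "(a, a) \<notin> E\<^sup>+" using assms(3) unfolding acyclic_def by blast
    then show "{y. (y, a) \<in> E\<^sup>+} \<noteq> {y. (y, b) \<in> E\<^sup>+}" using ab by blast
  qed
  moreover have "finite {y. (y, b) \<in> E\<^sup>+}"
    using trancl_subset_Sigma[OF assms(2)] assms(1) by (auto intro: finite_subset)
  ultimately show "ancestor_count E a < ancestor_count E b"
    unfolding ancestor_count_def by (rule psubset_card_mono[rotated])
qed

lemma phylo_netD:
  assumes "phylo_net X V E"
  shows "finite V" "E \<subseteq> V \<times> V" "acyclic E" "X \<subseteq> V"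
  using assms unfolding phylo_net_def by auto

lemma phylo_net_node_cases:
  "phylo_net X V E \<Longrightarrow> x \<in> V \<Longrightarrow> is_root V E x \<or> is_leaf V E x \<or> is_split V E x \<or> is_retic V E x"
  unfolding phylo_net_def by blast

lemma phylo_net_leaf: "phylo_net X V E \<Longrightarrow> x \<in> X \<Longrightarrow> is_leaf V E x"
  unfolding phylo_net_def by blast

lemma phylo_net_no_loop: "phylo_net X V E \<Longrightarrow> (x, x) \<notin> E"
  using phylo_netD(3) unfolding acyclic_def by blast

lemma indeg_eq_card_in_edges:
  assumes "E \<subseteq> V \<times> V"
  shows "indeg V E x = card {e \<in> E. snd e = x}"
proof -
  have "bij_betw (\<lambda>y. (y, x)) {y \<in> V. (y, x) \<in> E} {e \<in> E. snd e = x}"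
    using assms by (auto simp: bij_betw_def inj_on_def image_iff)
  then show ?thesis unfolding indeg_def by (rule bij_betw_same_card)
qed

lemma outdeg_eq_card_out_edges:
  assumes "E \<subseteq> V \<times> V"
  shows "outdeg V E x = card {e \<in> E. fst e = x}"
proof -
  have "bij_betw (\<lambda>y. (x, y)) {y \<in> V. (x, y) \<in> E} {e \<in> E. fst e = x}"
    using assms by (auto simp: bij_betw_def inj_on_def image_iff)
  then show ?thesis unfolding outdeg_def by (rule bij_betw_same_card)
qed

lemma card_filter_exchange:
  assumes "finite E" "set rs \<subseteq> E" "distinct rs" "set as \<inter> E = {}" "distinct as"
  shows "card {e \<in> (E - set rs) \<union> set as. P e} + length (filter P rs) =
         card {e \<in> E. P e} + length (filter P as)"
proof -
  let ?R = "set (filter P rs)" and ?A = "set (filter P as)" and ?E = "{e \<in> E. P e}"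
  have split: "{e \<in> (E - set rs) \<union> set as. P e} = (?E - ?R) \<union> ?A" by auto
  have R: "card ?R = length (filter P rs)" and A: "card ?A = length (filter P as)"
    using assms(3,5) by (simp_all only: distinct_card distinct_filter)
  have "?R \<subseteq> ?E" using assms(2) by auto
  then have "card (?E - ?R) + card ?R = card ?E"
    using assms(1) by (simp add: card_Diff_subset card_mono)
  moreover have "card ((?E - ?R) \<union> ?A) = card (?E - ?R) + card ?A"
    using assms(1,4) by (intro card_Un_disjoint) auto
  ultimately show ?thesis unfolding split R[symmetric] A[symmetric] by linarith
qed

lemma phylo_net_two_children:
  assumes net: "phylo_net X V E" and "(x, a) \<in> E" "(x, b) \<in> E" "a \<noteq> b"
  shows "is_split V E x" "{y \<in> V. (x, y) \<in> E} = {a, b}"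
proof -
  have EV: "E \<subseteq> V \<times> V" and fin: "finite {y \<in> V. (x, y) \<in> E}" using phylo_netD[OF net] by auto
  have sub: "{a, b} \<subseteq> {y \<in> V. (x, y) \<in> E}" and "x \<in> V" using assms EV by auto
  have two: "card {a, b} = 2" using assms(4) by simp
  then have "2 \<le> outdeg V E x" unfolding outdeg_def using card_mono[OF fin sub] by simp
  then show split: "is_split V E x"
    using phylo_net_node_cases[OF net \<open>x \<in> V\<close>] unfolding is_root_def is_leaf_def is_retic_def by auto
  then show "{y \<in> V. (x, y) \<in> E} = {a, b}"
    using card_subset_eq[OF fin sub] two unfolding is_split_def outdeg_def by simp
qed

lemma phylo_net_two_parents:
  assumes net: "phylo_net X V E" and "(a, x) \<in> E" "(b, x) \<in> E" "a \<noteq> b"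
  shows "is_retic V E x" "{y \<in> V. (y, x) \<in> E} = {a, b}"
proof -
  have EV: "E \<subseteq> V \<times> V" and fin: "finite {y \<in> V. (y, x) \<in> E}" using phylo_netD[OF net] by auto
  have sub: "{a, b} \<subseteq> {y \<in> V. (y, x) \<in> E}" and "x \<in> V" using assms EV by auto
  have two: "card {a, b} = 2" using assms(4) by simp
  then have "2 \<le> indeg V E x" unfolding indeg_def using card_mono[OF fin sub] by simp
  then show retic: "is_retic V E x"
    using phylo_net_node_cases[OF net \<open>x \<in> V\<close>] unfolding is_root_def is_leaf_def is_split_def by auto
  then show "{y \<in> V. (y, x) \<in> E} = {a, b}"
    using card_subset_eq[OF fin sub] two unfolding is_retic_def indeg_def by simp
qed

lemma indeg_one_parent:
  assumes "indeg V E x = 1" "E \<subseteq> V \<times> V" "(p, x) \<in> E"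
  shows "{y \<in> V. (y, x) \<in> E} = {p}"
proof -
  obtain q where "{y \<in> V. (y, x) \<in> E} = {q}"
    using assms(1) unfolding indeg_def by (rule card_1_singletonE)
  moreover have "p \<in> {y \<in> V. (y, x) \<in> E}" using assms(2,3) by auto
  ultimately show ?thesis by simp
qed

lemma outdeg_one_child:
  assumes "outdeg V E x = 1" "E \<subseteq> V \<times> V" "(x, c) \<in> E"
  shows "{y \<in> V. (x, y) \<in> E} = {c}"
proof -
  obtain q where "{y \<in> V. (x, y) \<in> E} = {q}"
    using assms(1) unfolding outdeg_def by (rule card_1_singletonE)
  moreover have "c \<in> {y \<in> V. (x, y) \<in> E}" using assms(2,3) by auto
  ultimately show ?thesis by simp
qed

lemma phylo_net_transfer:
  assumes net: "phylo_net X V E" and "finite V'" "E' \<subseteq> V' \<times> V'" "acyclic E'"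
    and bij: "bij_betw f V V'" and fixes_X: "\<And>x. x \<in> X \<Longrightarrow> f x = x"
    and deg: "\<And>x. x \<in> V \<Longrightarrow> indeg V' E' (f x) = indeg V E x \<and> outdeg V' E' (f x) = outdeg V E x"
  shows "phylo_net X V' E'"
proof -
  have V': "V' = f ` V" and inj: "inj_on f V" using bij by (auto simp: bij_betw_def)
  have types: "(is_root V' E' (f x) \<longleftrightarrow> is_root V E x) \<and> (is_leaf V' E' (f x) \<longleftrightarrow> is_leaf V E x) \<and>
      (is_split V' E' (f x) \<longleftrightarrow> is_split V E x) \<and> (is_retic V' E' (f x) \<longleftrightarrow> is_retic V E x)"
    if "x \<in> V" for x
    using deg[OF that] that V' unfolding is_root_def is_leaf_def is_split_def is_retic_def by auto
  have image: "{y \<in> V'. Q y} = f ` {x \<in> V. Q (f x)}" for Q using V' by blast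
  have "{x \<in> V. is_root V' E' (f x)} = {x \<in> V. is_root V E x}" using types by blast
  then have roots: "{y \<in> V'. is_root V' E' y} = f ` {x \<in> V. is_root V E x}"
    unfolding image by simp
  have "{x \<in> V. is_leaf V' E' (f x)} = {x \<in> V. is_leaf V E x}" using types by blast
  then have leaves: "{y \<in> V'. is_leaf V' E' y} = X"
    unfolding image using net fixes_X unfolding phylo_net_def by force
  have "card {y \<in> V'. is_root V' E' y} = card {x \<in> V. is_root V E x}"
    unfolding roots using inj by (intro card_image) (auto intro: inj_on_subset)
  moreover have "is_root V' E' y \<or> is_leaf V' E' y \<or> is_split V' E' y \<or> is_retic V' E' y" if "y \<in> V'" for y
    using that types phylo_net_node_cases[OF net] unfolding V' by blast
  ultimately show ?thesis using assms(2-4) leaves net unfolding phylo_net_def by auto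
qed

abbreviation rename_edges :: "('v \<Rightarrow> 'w) \<Rightarrow> ('v \<times> 'v) set \<Rightarrow> ('w \<times> 'w) set" where
  "rename_edges f E \<equiv> map_prod f f ` E"

lemma degrees_rename:
  assumes inj: "inj_on f V" and EV: "E \<subseteq> V \<times> V" and "x \<in> V"
  shows "indeg (f ` V) (rename_edges f E) (f x) = indeg V E x"
    and "outdeg (f ` V) (rename_edges f E) (f x) = outdeg V E x"
proof -
  have EV': "rename_edges f E \<subseteq> f ` V \<times> f ` V" using EV by auto
  have inj_E: "inj_on (map_prod f f) A" if "A \<subseteq> E" for A
    using map_prod_inj_on[OF inj inj] that EV by (blast intro: inj_on_subset)
  have same: "f c = f x \<longleftrightarrow> c = x" if "c \<in> V" for c
    using inj that \<open>x \<in> V\<close> by (auto dest: inj_onD)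
  have "{e \<in> rename_edges f E. snd e = f x} = rename_edges f {e \<in> E. snd e = x}"
    using same EV by force
  then show "indeg (f ` V) (rename_edges f E) (f x) = indeg V E x"
    unfolding indeg_eq_card_in_edges[OF EV] indeg_eq_card_in_edges[OF EV'] by (simp add: card_image inj_E)
  have "{e \<in> rename_edges f E. fst e = f x} = rename_edges f {e \<in> E. fst e = x}"
    using same EV by force
  then show "outdeg (f ` V) (rename_edges f E) (f x) = outdeg V E x"
    unfolding outdeg_eq_card_out_edges[OF EV] outdeg_eq_card_out_edges[OF EV'] by (simp add: card_image inj_E)
qed

lemma phylo_net_rename:
  assumes net: "phylo_net X V E" and inj: "inj_on f V" and fixes_X: "\<And>x. x \<in> X \<Longrightarrow> f x = x"
  shows "phylo_net X (f ` V) (rename_edges f E)"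
proof (rule phylo_net_transfer[OF net])
  have fin: "finite V" and EV: "E \<subseteq> V \<times> V" and ac: "acyclic E" using phylo_netD[OF net] by auto
  have "strict_rank (ancestor_count E \<circ> inv_into V f) (rename_edges f E)"
    unfolding strict_rank_def
  proof clarsimp
    fix a b assume "(a, b) \<in> E"
    moreover have "a \<in> V" "b \<in> V" using \<open>(a, b) \<in> E\<close> EV by auto
    ultimately show "ancestor_count E (inv_into V f (f a)) < ancestor_count E (inv_into V f (f b))"
      using strict_rank_ancestor_count[OF fin EV ac] inj by (auto simp: strict_rank_def inv_into_f_f)
  qed
  then show "acyclic (rename_edges f E)" by (rule strict_rank_acyclic)
  show "finite (f ` V)" "rename_edges f E \<subseteq> f ` V \<times> f ` V" using fin EV by auto
  show "bij_betw f V (f ` V)" using inj by (rule inj_on_imp_bij_betw)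
qed (use degrees_rename[OF inj] phylo_netD(2)[OF net] fixes_X in auto)

lemma net_iso_rename:
  assumes inj: "inj_on f V" and fixes_X: "\<And>x. x \<in> X \<Longrightarrow> f x = x" and "X \<subseteq> V" and EV: "E \<subseteq> V \<times> V"
  shows "net_iso X (f ` V, rename_edges f E) (V, E)"
  unfolding net_iso_def fst_conv snd_conv
proof (intro exI[of _ "inv_into V f"] conjI ballI)
  show "bij_betw (inv_into V f) (f ` V) V" using inj by (rule bij_betw_inv_into[OF inj_on_imp_bij_betw])
  show "inv_into V f x = x" if "x \<in> X" for x
    using that fixes_X \<open>X \<subseteq> V\<close> inj by (metis inv_into_f_f subsetD)
  fix a b assume "a \<in> f ` V" "b \<in> f ` V"
  then obtain c d where cd: "c \<in> V" "d \<in> V" "a = f c" "b = f d" by auto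
  have "(f c, f d) \<in> rename_edges f E \<longleftrightarrow> (c, d) \<in> E"
  proof
    assume "(f c, f d) \<in> rename_edges f E"
    then obtain c' d' where "(c', d') \<in> E" "f c' = f c" "f d' = f d" by auto
    moreover have "c' \<in> V" "d' \<in> V" using \<open>(c', d') \<in> E\<close> EV by auto
    ultimately show "(c, d) \<in> E" using inj_onD[OF inj] cd(1,2) by metis
  qed auto
  then show "(a, b) \<in> rename_edges f E \<longleftrightarrow> (inv_into V f a, inv_into V f b) \<in> E"
    using cd inj by (simp add: inv_into_f_f)
qed

lemma net_iso_trans:
  assumes "net_iso X M N" "net_iso X N P"
  shows "net_iso X M P"
proof -
  obtain \<phi> where \<phi>: "bij_betw \<phi> (fst M) (fst N)"
    "\<forall>a \<in> fst M. \<forall>b \<in> fst M. (a, b) \<in> snd M \<longleftrightarrow> (\<phi> a, \<phi> b) \<in> snd N" "\<forall>x \<in> X. \<phi> x = x"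
    using assms(1) unfolding net_iso_def by blast
  obtain \<psi> where \<psi>: "bij_betw \<psi> (fst N) (fst P)"
    "\<forall>a \<in> fst N. \<forall>b \<in> fst N. (a, b) \<in> snd N \<longleftrightarrow> (\<psi> a, \<psi> b) \<in> snd P" "\<forall>x \<in> X. \<psi> x = x"
    using assms(2) unfolding net_iso_def by blast
  have "bij_betw (\<psi> \<circ> \<phi>) (fst M) (fst P)" using \<phi>(1) \<psi>(1) by (rule bij_betw_trans)
  moreover have "\<phi> a \<in> fst N" if "a \<in> fst M" for a using bij_betwE[OF \<phi>(1)] that by blast
  ultimately show ?thesis using \<phi>(2,3) \<psi>(2,3) unfolding net_iso_def by (intro exI[of _ "\<psi> \<circ> \<phi>"]) auto
qed

definition tail_moved_edges ::
  "('v \<times> 'v) set \<Rightarrow> 'v \<Rightarrow> 'v \<Rightarrow> 'v \<Rightarrow> 'v \<Rightarrow> 'v \<Rightarrow> 'v \<Rightarrow> 'v \<Rightarrow> ('v \<times> 'v) set" where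
  "tail_moved_edges E p u v w a b u' =
     (E - {(p, u), (u, v), (u, w), (a, b)}) \<union> {(p, w), (u', v), (a, u'), (u', b)}"

locale tail_move_setup =
  fixes X V :: "'v set" and E :: "('v \<times> 'v) set" and p u v w a b u' :: 'v
  assumes net: "phylo_net X V E"
    and edges: "(p, u) \<in> E" "(u, v) \<in> E" "(u, w) \<in> E" "(a, b) \<in> E"
    and children_distinct: "v \<noteq> w"
    and target_other: "(a, b) \<notin> {(p, u), (u, v), (u, w)}"
    and fresh: "u' \<notin> V"
begin

abbreviation "V' \<equiv> insert u' V - {u}"
abbreviation "E' \<equiv> tail_moved_edges E p u v w a b u'"

lemma EV: "E \<subseteq> V \<times> V"
  using phylo_netD(2)[OF net] .

lemma split_u: "is_split V E u" and children_u: "{y \<in> V. (u, y) \<in> E} = {v, w}"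
  using phylo_net_two_children[OF net edges(2,3) children_distinct] by auto

lemma parents_u: "{y \<in> V. (y, u) \<in> E} = {p}"
  using indeg_one_parent[OF _ EV edges(1)] split_u unfolding is_split_def by simp

lemma parent_u_unique: "(y, u) \<in> E \<Longrightarrow> y = p"
  using parents_u EV by blast

lemma child_u_cases: "(u, y) \<in> E \<Longrightarrow> y = v \<or> y = w"
  using children_u EV by blast

lemma nodes_in_V: "p \<in> V" "u \<in> V" "v \<in> V" "w \<in> V" "a \<in> V" "b \<in> V"
  using edges EV by auto

lemma nodes_distinct: "p \<noteq> u" "v \<noteq> u" "w \<noteq> u" "a \<noteq> u" "b \<noteq> u"
  "u' \<noteq> p" "u' \<noteq> u" "u' \<noteq> v" "u' \<noteq> w" "u' \<noteq> a" "u' \<noteq> b"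
proof -
  show "p \<noteq> u" using edges(1) phylo_net_no_loop[OF net] by blast
  show "v \<noteq> u" using edges(2) phylo_net_no_loop[OF net] by blast
  show "w \<noteq> u" using edges(3) phylo_net_no_loop[OF net] by blast
  show "a \<noteq> u" using target_other edges(4) by (auto dest: child_u_cases)
  show "b \<noteq> u" using target_other edges(4) by (auto dest: parent_u_unique)
  show "u' \<noteq> p" "u' \<noteq> u" "u' \<noteq> v" "u' \<noteq> w" "u' \<noteq> a" "u' \<noteq> b" using fresh nodes_in_V by auto
qed

lemma result_subset: "E' \<subseteq> V' \<times> V'"
proof -
  have "e \<in> V' \<times> V'" if e: "e \<in> E - {(p, u), (u, v), (u, w), (a, b)}" for e
  proof -
    obtain c d where cd: "e = (c, d)" by fastforce
    have "c \<noteq> u" using e child_u_cases unfolding cd by blast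
    moreover have "d \<noteq> u" using e parent_u_unique unfolding cd by blast
    ultimately show ?thesis using e EV unfolding cd by auto
  qed
  moreover have "{(p, w), (u', v), (a, u'), (u', b)} \<subseteq> V' \<times> V'"
    using nodes_in_V nodes_distinct by auto
  ultimately show ?thesis unfolding tail_moved_edges_def by (intro Un_least subsetI) auto
qed

lemma fresh_no_edge: "(x, u') \<notin> E" "(u', x) \<notin> E"
  using fresh EV by auto

lemma new_node_parents: "{y \<in> V'. (y, u') \<in> E'} = {a}"
  using nodes_in_V nodes_distinct fresh_no_edge unfolding tail_moved_edges_def by auto

lemma new_node_children: "b \<noteq> v \<Longrightarrow> {y \<in> V'. (u', y) \<in> E'} = {b, v}"
  using nodes_in_V nodes_distinct fresh_no_edge unfolding tail_moved_edges_def by auto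

lemma tail_move_result:
  assumes "phylo_net X V' E'"
  shows "tail_move X V E u v a b u' V' E'"
proof -
  define Es where "Es = subdivide (E - {(u, v)}) (a, b) u'"
  have Es: "(c, d) \<in> Es \<longleftrightarrow> (c, d) \<in> E \<and> (c, d) \<noteq> (u, v) \<and> (c, d) \<noteq> (a, b) \<or>
      (c, d) = (a, u') \<or> (c, d) = (u', b)" for c d
    unfolding Es_def subdivide_def by auto
  have "{y \<in> insert u' V. (y, u) \<in> Es} = {p}"
    unfolding Es using target_other nodes_distinct nodes_in_V edges(1) by (auto dest: parent_u_unique)
  moreover have "{y \<in> insert u' V. (u, y) \<in> Es} = {w}"
    unfolding Es using target_other nodes_distinct nodes_in_V edges(3) children_distinct
    by (auto dest: child_u_cases)
  ultimately have "suppress (insert u' V) Es u V' ((Es - {(p, u), (u, w)}) \<union> {(p, w)})"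
    unfolding suppress_def using nodes_in_V by blast
  moreover have "E' = insert (u', v) ((Es - {(p, u), (u, w)}) \<union> {(p, w)})"
    using nodes_distinct unfolding Es_def subdivide_def tail_moved_edges_def by auto
  ultimately have "\<exists>E3. suppress (insert u' V) Es u V' E3 \<and> E' = insert (u', v) E3" by blast
  moreover have "(a, b) \<in> E - {(u, v)}" using edges(4) target_other by simp
  ultimately show ?thesis
    unfolding tail_move_def Es_def using assms net edges(2) split_u fresh by (intro conjI) simp_all
qed

(* The removed and the added edges have the same heads and the same tails, up to u versus u'. *)
lemma degrees_preserved:
  assumes "(p, w) \<notin> E" "b \<noteq> v" "x \<noteq> u" "x \<noteq> u'"
  shows "indeg V' E' x = indeg V E x" "outdeg V' E' x = outdeg V E x"
proof -
  define rs where "rs = [(p, u), (u, v), (u, w), (a, b)]"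
  define as where "as = [(p, w), (u', v), (a, u'), (u', b)]"
  have E': "E' = (E - set rs) \<union> set as"
    unfolding rs_def as_def tail_moved_edges_def by simp
  have "finite E" using phylo_netD[OF net] EV by (meson finite_SigmaI finite_subset)
  moreover have "set rs \<subseteq> E" "distinct rs"
    using edges target_other children_distinct nodes_distinct unfolding rs_def by auto
  moreover have "set as \<inter> E = {}" "distinct as"
    using assms(1,2) fresh_no_edge nodes_distinct unfolding as_def by auto
  ultimately have exchange: "card {e \<in> E'. P e} + length (filter P rs) =
      card {e \<in> E. P e} + length (filter P as)" for P
    unfolding E' by (rule card_filter_exchange)
  have "length (filter (\<lambda>e. snd e = x) rs) = length (filter (\<lambda>e. snd e = x) as)"
    "length (filter (\<lambda>e. fst e = x) rs) = length (filter (\<lambda>e. fst e = x) as)"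
    using assms(3,4) unfolding rs_def as_def by auto
  then show "indeg V' E' x = indeg V E x" "outdeg V' E' x = outdeg V E x"
    using exchange[of "\<lambda>e. snd e = x"] exchange[of "\<lambda>e. fst e = x"]
    unfolding indeg_eq_card_in_edges[OF EV] indeg_eq_card_in_edges[OF result_subset]
      outdeg_eq_card_out_edges[OF EV] outdeg_eq_card_out_edges[OF result_subset]
    by simp_all
qed

lemma phylo_net_result:
  assumes "(p, w) \<notin> E" "b \<noteq> v" "acyclic E'"
  shows "phylo_net X V' E'"
proof (rule phylo_net_transfer[OF net])
  define f where "f x = (if x = u then u' else x)" for x
  show "bij_betw f V V'"
    using fresh nodes_in_V unfolding f_def bij_betw_def inj_on_def by auto
  show "f x = x" if "x \<in> X" for x
    using that split_u net unfolding f_def phylo_net_def is_split_def is_leaf_def by auto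
  have "is_split V' E' u'"
    unfolding is_split_def indeg_def outdeg_def new_node_parents new_node_children[OF assms(2)]
    using assms(2) nodes_distinct by simp
  then show "indeg V' E' (f x) = indeg V E x \<and> outdeg V' E' (f x) = outdeg V E x" if "x \<in> V" for x
    using degrees_preserved[OF assms(1,2)] split_u fresh that
    unfolding f_def is_split_def by auto
  show "finite V'" using phylo_netD(1)[OF net] by simp
qed (use result_subset assms(3) in auto)

lemma strict_rank_result:
  assumes "strict_rank r E" "r a < r u'" "r u' < r b" "r u' < r v"
  shows "strict_rank r E'"
proof -
  have "r p < r w" using strict_rankD[OF assms(1) edges(1)] strict_rankD[OF assms(1) edges(3)] by simp
  then show ?thesis using assms unfolding strict_rank_def tail_moved_edges_def by auto
qed

end

(* Applied with S the edges touched by a sequence of moves, outside of which both sides agree with E. *)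
lemma set_eq_by_cases: "(\<And>e. e \<notin> S \<Longrightarrow> e \<in> A \<longleftrightarrow> e \<in> B) \<Longrightarrow> \<forall>e \<in> S. e \<in> A \<longleftrightarrow> e \<in> B \<Longrightarrow> A = B"
  by blast

lemma tail_stepI: "tail_move X V E u v a b u' V' E' \<Longrightarrow> ((V, E), (V', E')) \<in> tail_step X"
  unfolding tail_step_def by blast

locale head_move_above =
  fixes X V :: "'v set" and E :: "('v \<times> 'v) set" and u v x1 y1 x2 y2 v' :: 'v
    and V' :: "'v set" and E' :: "('v \<times> 'v) set" and p2 z :: 'v
  assumes head_move: "head_move X V E u v x1 y1 x2 y2 v' V' E'"
    and parent_x2: "(p2, x2) \<in> E"
    and other_child_x2: "(x2, z) \<in> E" "z \<noteq> y2"
    and y1_above_p2: "(y1, p2) \<in> E\<^sup>*"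
begin

lemma net: "phylo_net X V E" and net': "phylo_net X V' E'"
  and edges: "(u, v) \<in> E" "(x1, v) \<in> E" "(v, y1) \<in> E" "(x2, y2) \<in> E"
  and parents_v_distinct: "x1 \<noteq> u" and fresh_v': "v' \<notin> V" and retic_v: "is_retic V E v"
  using head_move unfolding head_move_def by auto

lemma EV: "E \<subseteq> V \<times> V"
  using phylo_netD(2)[OF net] .

lemma nodes_in_V: "u \<in> V" "v \<in> V" "x1 \<in> V" "y1 \<in> V" "x2 \<in> V" "y2 \<in> V" "p2 \<in> V" "z \<in> V"
  using edges parent_x2 other_child_x2 EV by auto

abbreviation "rk \<equiv> ancestor_count E"

lemma rank: "strict_rank rk E"
  using strict_rank_ancestor_count phylo_netD[OF net] by blast

(* The factor leaves room for fresh nodes strictly between the ranks of adjacent nodes. *)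
lemma rank_scaled:
  assumes "0 < k" "\<And>c. c \<in> V \<Longrightarrow> R c = k * rk c"
  shows "strict_rank R E"
  unfolding strict_rank_def
proof clarify
  fix a b assume "(a, b) \<in> E"
  then show "R a < R b" using assms strict_rankD[OF rank] EV by auto
qed

lemma rank_order: "rk u < rk v" "rk x1 < rk v" "rk v < rk y1" "rk y1 \<le> rk p2" "rk p2 < rk x2"
  "rk x2 < rk y2" "rk x2 < rk z"
  using strict_rankD[OF rank] edges parent_x2 other_child_x2 strict_rank_rtrancl[OF rank y1_above_p2]
  by auto

lemma nodes_distinct:
  "u \<noteq> x1" "u \<noteq> v" "u \<noteq> y1" "u \<noteq> p2" "u \<noteq> x2" "u \<noteq> y2" "u \<noteq> z"
  "x1 \<noteq> v" "x1 \<noteq> y1" "x1 \<noteq> p2" "x1 \<noteq> x2" "x1 \<noteq> y2" "x1 \<noteq> z"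
  "v \<noteq> y1" "v \<noteq> p2" "v \<noteq> x2" "v \<noteq> y2" "v \<noteq> z"
  "y1 \<noteq> x2" "y1 \<noteq> y2" "y1 \<noteq> z" "p2 \<noteq> x2" "p2 \<noteq> y2" "p2 \<noteq> z" "x2 \<noteq> y2" "x2 \<noteq> z" "y2 \<noteq> z"
  using rank_order parents_v_distinct other_child_x2(2) by auto

lemmas nodes_neq = nodes_distinct nodes_distinct[THEN not_sym]

lemma parent_v_cases: "(c, v) \<in> E \<Longrightarrow> c = u \<or> c = x1"
  using phylo_net_two_parents(2)[OF net edges(1,2)] parents_v_distinct EV by blast

lemma child_v_unique: "(v, c) \<in> E \<Longrightarrow> c = y1"
  using outdeg_one_child[OF _ EV edges(3)] retic_v EV unfolding is_retic_def by blast

lemma split_x2: "is_split V E x2"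
  using phylo_net_two_children(1)[OF net edges(4) other_child_x2(1)] other_child_x2(2) by simp

lemma parent_x2_unique: "(c, x2) \<in> E \<Longrightarrow> c = p2"
  using indeg_one_parent[OF _ EV parent_x2] split_x2 EV unfolding is_split_def by blast

lemma child_x2_cases: "(x2, c) \<in> E \<Longrightarrow> c = y2 \<or> c = z"
  using phylo_net_two_children(2)[OF net edges(4) other_child_x2(1)] other_child_x2(2) EV by blast

lemma fresh_neq: "w \<notin> V \<Longrightarrow> c \<in> V \<Longrightarrow> w \<noteq> c \<and> c \<noteq> w"
  by auto

lemma fresh_no_edge: "w \<notin> V \<Longrightarrow> (w, c) \<notin> E \<and> (c, w) \<notin> E"
  using EV by auto

lemma result_edges:
  "E' = (E - {(u, v), (x1, v), (v, y1), (x2, y2)}) \<union> {(u, v'), (x1, y1), (x2, v'), (v', y2)}"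
proof -
  define Es where "Es = subdivide (E - {(u, v)}) (x2, y2) v'"
  obtain E3 a b where E': "E' = insert (u, v') E3"
    and parents: "{c \<in> insert v' V. (c, v) \<in> Es} = {a}" and children: "{c \<in> insert v' V. (v, c) \<in> Es} = {b}"
    and E3: "E3 = (Es - {(a, v), (v, b)}) \<union> {(a, b)}"
    using head_move unfolding head_move_def suppress_def Es_def by blast
  have Es: "(c, d) \<in> Es \<longleftrightarrow> (c, d) \<in> E \<and> (c, d) \<noteq> (u, v) \<and> (c, d) \<noteq> (x2, y2) \<or>
      (c, d) = (x2, v') \<or> (c, d) = (v', y2)" for c d
    unfolding Es_def subdivide_def by auto
  have "x1 \<in> {c \<in> insert v' V. (c, v) \<in> Es}"
    unfolding Es using edges(2) nodes_in_V nodes_distinct parents_v_distinct by auto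
  then have a: "a = x1" unfolding parents by simp
  have "y1 \<in> {c \<in> insert v' V. (v, c) \<in> Es}"
    unfolding Es using edges(3) nodes_in_V nodes_distinct by auto
  then have b: "b = y1" unfolding children by simp
  show ?thesis
    unfolding E' E3 a b using Es nodes_distinct by auto
qed

(* The head-move result with v reused as the node subdividing (x2, y2). *)
abbreviation "Eh \<equiv> (E - {(x1, v), (v, y1), (x2, y2)}) \<union> {(x1, y1), (x2, v), (v, y2)}"

lemma result_transposed:
  "transpose v v' ` V' = V" "rename_edges (transpose v v') E' = Eh"
proof -
  let ?\<tau> = "transpose v v'"
  have "V' = insert v' V - {v}" using head_move unfolding head_move_def suppress_def by blast
  then have V': "V' = insert v' (V - {v})" using fresh_v' nodes_in_V by auto
  have "?\<tau> ` (V - {v}) = id ` (V - {v})"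
    by (rule image_cong) (use fresh_v' in \<open>auto simp: transpose_def\<close>)
  then show "?\<tau> ` V' = V" unfolding V' using nodes_in_V by auto
  let ?R = "{(u, v), (x1, v), (v, y1), (x2, y2)}"
  have fixed: "map_prod ?\<tau> ?\<tau> e = e" if "e \<in> E - ?R" for e
  proof -
    obtain c d where e: "e = (c, d)" by fastforce
    have "c \<noteq> v" "d \<noteq> v" using that unfolding e by (auto dest: parent_v_cases child_v_unique)
    moreover have "c \<noteq> v'" "d \<noteq> v'" using that fresh_no_edge[OF fresh_v'] unfolding e by auto
    ultimately show ?thesis unfolding e by simp
  qed
  have "rename_edges ?\<tau> (E - ?R) = id ` (E - ?R)" by (rule image_cong) (simp_all add: fixed)
  then have "rename_edges ?\<tau> (E - ?R) = E - ?R" by simp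
  moreover have "rename_edges ?\<tau> {(u, v'), (x1, y1), (x2, v'), (v', y2)} = {(u, v), (x1, y1), (x2, v), (v, y2)}"
    by (simp add: nodes_neq fresh_neq[OF fresh_v'] nodes_in_V)
  moreover have "(E - ?R) \<union> {(u, v), (x1, y1), (x2, v), (v, y2)} = Eh"
    using edges(1) nodes_distinct by blast
  ultimately show "rename_edges ?\<tau> E' = Eh"
    unfolding result_edges image_Un by simp
qed

lemma not_leaf_v_x2: "x \<in> X \<Longrightarrow> x \<noteq> v \<and> x \<noteq> x2"
  using phylo_net_leaf[OF net] retic_v split_x2 unfolding is_leaf_def is_retic_def is_split_def by auto

lemma transpose_v_fixes_X: "x \<in> X \<Longrightarrow> transpose v v' x = x"
  using not_leaf_v_x2 fresh_v' phylo_netD(4)[OF net] unfolding transpose_def by auto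

lemma iso_result: "net_iso X (V, Eh) (V', E')"
proof -
  have "net_iso X (transpose v v' ` V', rename_edges (transpose v v') E') (V', E')"
    by (rule net_iso_rename) (use transpose_v_fixes_X phylo_netD[OF net'] in auto)
  then show ?thesis unfolding result_transposed .
qed

lemma phylo_net_Eh: "phylo_net X V Eh"
proof -
  have "phylo_net X (transpose v v' ` V') (rename_edges (transpose v v') E')"
    by (rule phylo_net_rename[OF net']) (simp_all add: transpose_v_fixes_X)
  then show ?thesis unfolding result_transposed .
qed

lemma Eh_transposed:
  assumes "t \<notin> V"
  shows "transpose x2 t ` V = insert t V - {x2}"
    and "rename_edges (transpose x2 t) Eh =
      (E - {(x1, v), (v, y1), (x2, y2), (p2, x2), (x2, z)}) \<union> {(x1, y1), (t, v), (v, y2), (p2, t), (t, z)}"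
proof -
  let ?\<tau> = "transpose x2 t"
  have "?\<tau> ` (V - {x2}) = id ` (V - {x2})"
    by (rule image_cong) (use assms in \<open>auto simp: transpose_def\<close>)
  moreover have "V = insert x2 (V - {x2})" using nodes_in_V by auto
  then have "?\<tau> ` V = insert t (?\<tau> ` (V - {x2}))" by (metis image_insert transpose_apply_first)
  ultimately show "?\<tau> ` V = insert t V - {x2}" using assms nodes_in_V by auto
  let ?R = "{(x1, v), (v, y1), (x2, y2), (p2, x2), (x2, z)}"
  have fixed: "map_prod ?\<tau> ?\<tau> e = e" if "e \<in> E - ?R" for e
  proof -
    obtain c d where e: "e = (c, d)" by fastforce
    have "c \<noteq> x2" "d \<noteq> x2" using that unfolding e by (auto dest: parent_x2_unique child_x2_cases)
    moreover have "c \<noteq> t" "d \<noteq> t" using that fresh_no_edge[OF assms] unfolding e by auto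
    ultimately show ?thesis unfolding e by simp
  qed
  have "rename_edges ?\<tau> (E - ?R) = id ` (E - ?R)" by (rule image_cong) (simp_all add: fixed)
  moreover have "Eh = (E - ?R) \<union> {(x1, y1), (x2, v), (v, y2), (p2, x2), (x2, z)}"
    using parent_x2 other_child_x2 nodes_distinct by blast
  ultimately show "rename_edges ?\<tau> Eh = (E - ?R) \<union> {(x1, y1), (t, v), (v, y2), (p2, t), (t, z)}"
    by (simp add: image_Un nodes_neq fresh_neq[OF assms] nodes_in_V)
qed

lemma transpose_x2_fixes_X: "t \<notin> V \<Longrightarrow> x \<in> X \<Longrightarrow> transpose x2 t x = x"
  using not_leaf_v_x2 phylo_netD(4)[OF net] unfolding transpose_def by auto

lemma iso_Eh_transposed:
  assumes "t \<notin> V"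
  shows "net_iso X (transpose x2 t ` V, rename_edges (transpose x2 t) Eh) (V, Eh)"
    and "phylo_net X (transpose x2 t ` V) (rename_edges (transpose x2 t) Eh)"
proof -
  have "X \<subseteq> V" "Eh \<subseteq> V \<times> V" using phylo_netD[OF phylo_net_Eh] by auto
  then show "net_iso X (transpose x2 t ` V, rename_edges (transpose x2 t) Eh) (V, Eh)"
    by (intro net_iso_rename) (simp_all add: transpose_x2_fixes_X[OF assms])
  show "phylo_net X (transpose x2 t ` V) (rename_edges (transpose x2 t) Eh)"
    by (rule phylo_net_rename[OF phylo_net_Eh]) (simp_all add: transpose_x2_fixes_X[OF assms])
qed

lemma tail_steps_no_shortcut:
  assumes no_shortcut: "(p2, z) \<notin> E" and fresh: "s \<notin> V" "t \<notin> V" "s \<noteq> t"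
  shows "((V, E), (V, Eh)) \<in> tail_step X ^^ 3"
proof -
  note neq = nodes_neq fresh_neq[OF fresh(1)] fresh_neq[OF fresh(2)] nodes_in_V fresh(3)
  define R where "R = (\<lambda>c. 3 * rk c)(s := 3 * rk v + 1, t := 3 * rk x1 + 1)"
  have R: "strict_rank R E" by (rule rank_scaled[of 3]) (use neq in \<open>auto simp: R_def\<close>)
  interpret m1: tail_move_setup X V E p2 x2 y2 z v y1 s
    by unfold_locales (use net parent_x2 edges other_child_x2 fresh neq in auto)
  let ?V1 = "insert s V - {x2}" and ?E1 = "tail_moved_edges E p2 x2 y2 z v y1 s"
  have R1: "strict_rank R ?E1"
    by (rule m1.strict_rank_result[OF R]) (use rank_order neq in \<open>auto simp: R_def\<close>)
  have net1: "phylo_net X ?V1 ?E1"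
    using m1.phylo_net_result no_shortcut strict_rank_acyclic[OF R1] neq by simp
  interpret m2: tail_move_setup X ?V1 ?E1 v s y1 y2 x1 v t
    by unfold_locales (use net1 edges neq in \<open>auto simp: tail_moved_edges_def\<close>)
  let ?V2 = "insert t ?V1 - {s}" and ?E2 = "tail_moved_edges ?E1 v s y1 y2 x1 v t"
  have R2: "strict_rank R ?E2"
    by (rule m2.strict_rank_result[OF R1]) (use rank_order neq in \<open>auto simp: R_def\<close>)
  have "(v, y2) \<notin> ?E1" using neq by (auto simp: tail_moved_edges_def dest: child_v_unique)
  then have net2: "phylo_net X ?V2 ?E2"
    using m2.phylo_net_result strict_rank_acyclic[OF R2] neq by simp
  interpret m3: tail_move_setup X ?V2 ?E2 x1 t v y1 p2 z x2
    by unfold_locales (use net2 neq in \<open>auto simp: tail_moved_edges_def\<close>)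
  have V3: "insert x2 ?V2 - {t} = V" using neq by auto
  have v_y2: "(v, y2) \<notin> E" using neq child_v_unique by blast
  have E3: "tail_moved_edges ?E2 x1 t v y1 p2 z x2 = Eh"
    by (rule set_eq_by_cases[where S = "{(p2, x2), (x2, y2), (x2, z), (v, y1), (p2, z), (s, y2), (v, s),
        (s, y1), (x1, v), (v, y2), (t, y1), (x1, t), (t, v), (x1, y1), (x2, v)}"])
      (simp_all add: tail_moved_edges_def neq edges parent_x2 other_child_x2 no_shortcut v_y2
        fresh_no_edge[OF fresh(1)] fresh_no_edge[OF fresh(2)])
  have "tail_move X ?V2 ?E2 t v p2 z x2 V Eh"
    using m3.tail_move_result phylo_net_Eh unfolding V3 E3 by simp
  then show ?thesis
    using tail_stepI[OF m1.tail_move_result[OF net1]] tail_stepI[OF m2.tail_move_result[OF net2]]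
    by (auto simp: numeral_eq_Suc intro!: relpow_Suc_I2 tail_stepI)
qed

lemma tail_steps_shortcut_from_y1:
  assumes p2_y1: "p2 = y1" and y1_z: "(y1, z) \<in> E" and fresh: "t \<notin> V"
  shows "((V, E), (transpose x2 t ` V, rename_edges (transpose x2 t) Eh)) \<in> tail_step X ^^ 2"
proof -
  note neq = nodes_neq fresh_neq[OF fresh] nodes_in_V
  define R where "R = (\<lambda>c. 3 * rk c)(t := 3 * rk x1 + 1)"
  have R: "strict_rank R E" by (rule rank_scaled[of 3]) (use neq in \<open>auto simp: R_def\<close>)
  have y1_x2: "(y1, x2) \<in> E" using parent_x2 p2_y1 by simp
  interpret m1: tail_move_setup X V E v y1 z x2 x1 v t
    by unfold_locales (use net edges y1_z y1_x2 fresh neq in auto)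
  let ?V1 = "insert t V - {y1}" and ?E1 = "tail_moved_edges E v y1 z x2 x1 v t"
  have R1: "strict_rank R ?E1"
    by (rule m1.strict_rank_result[OF R]) (use rank_order neq in \<open>auto simp: R_def\<close>)
  have "(v, x2) \<notin> E" using neq child_v_unique by blast
  then have net1: "phylo_net X ?V1 ?E1"
    using m1.phylo_net_result strict_rank_acyclic[OF R1] neq by simp
  interpret m2: tail_move_setup X ?V1 ?E1 v x2 z y2 x1 t y1
    by unfold_locales (use net1 edges other_child_x2 neq in \<open>auto simp: tail_moved_edges_def\<close>)
  have V2: "insert y1 ?V1 - {x2} = transpose x2 t ` V" unfolding Eh_transposed[OF fresh] using neq by auto
  have v_x2: "(v, x2) \<notin> E" and x2_v: "(x2, v) \<notin> E" using neq child_v_unique parent_v_cases by blast+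
  have E2: "tail_moved_edges ?E1 v x2 z y2 x1 t y1 = rename_edges (transpose x2 t) Eh"
    unfolding Eh_transposed[OF fresh] p2_y1
    by (rule set_eq_by_cases[where S = "{(v, y1), (y1, z), (y1, x2), (x1, v), (v, x2), (x1, t), (t, v),
        (t, z), (x2, z), (x2, y2), (v, y2), (x1, y1), (y1, t), (x2, v)}"])
      (simp_all add: tail_moved_edges_def neq edges y1_x2 y1_z other_child_x2 v_x2 x2_v
        fresh_no_edge[OF fresh])
  have "tail_move X ?V1 ?E1 x2 z x1 t y1 (transpose x2 t ` V) (rename_edges (transpose x2 t) Eh)"
    using m2.tail_move_result iso_Eh_transposed(2)[OF fresh] unfolding V2 E2 by simp
  then show ?thesis
    using tail_stepI[OF m1.tail_move_result[OF net1]]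
    by (auto simp: numeral_eq_Suc intro!: relpow_Suc_I2 tail_stepI)
qed

lemma shortcut_grandparent:
  assumes p2_z: "(p2, z) \<in> E" and p2_y1: "p2 \<noteq> y1"
  obtains q2 where "(q2, p2) \<in> E" "(q2, z) \<notin> E" "q2 \<in> V"
    "q2 \<noteq> u" "q2 \<noteq> x1" "q2 \<noteq> v" "q2 \<noteq> p2" "q2 \<noteq> x2" "q2 \<noteq> y2" "q2 \<noteq> z"
proof -
  have "is_split V E p2" using phylo_net_two_children(1)[OF net parent_x2 p2_z] nodes_distinct by simp
  then obtain q2 where q2: "{c \<in> V. (c, p2) \<in> E} = {q2}"
    unfolding is_split_def indeg_def by (metis card_1_singletonE)
  then have q2_p2: "(q2, p2) \<in> E" and q2_V: "q2 \<in> V" by auto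
  obtain c where "(y1, c) \<in> E\<^sup>*" "(c, p2) \<in> E" using y1_above_p2 p2_y1 by (auto elim: rtranclE)
  moreover have "c = q2" using \<open>(c, p2) \<in> E\<close> q2 EV by blast
  ultimately have "rk y1 \<le> rk q2" using strict_rank_rtrancl[OF rank] by blast
  moreover have "rk q2 < rk p2" using strict_rankD[OF rank q2_p2] .
  ultimately have q2_neq: "q2 \<noteq> u" "q2 \<noteq> x1" "q2 \<noteq> v" "q2 \<noteq> p2" "q2 \<noteq> x2" "q2 \<noteq> y2" "q2 \<noteq> z"
    using rank_order by auto
  have "{c \<in> V. (c, z) \<in> E} = {p2, x2}"
    using phylo_net_two_parents(2)[OF net p2_z other_child_x2(1)] nodes_distinct by simp
  then have "(q2, z) \<notin> E" using q2_V q2_neq by blast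
  with q2_p2 q2_V q2_neq show thesis using that by blast
qed

lemma tail_steps_shortcut:
  assumes p2_z: "(p2, z) \<in> E" and p2_y1: "p2 \<noteq> y1"
    and fresh: "s \<notin> V" "t \<notin> V" "t2 \<notin> V" "s \<noteq> t" "s \<noteq> t2" "t \<noteq> t2"
  shows "((V, E), (transpose x2 t ` V, rename_edges (transpose x2 t) Eh)) \<in> tail_step X ^^ 4"
proof -
  obtain q2 where q2_p2: "(q2, p2) \<in> E" and q2_z: "(q2, z) \<notin> E" and q2_V: "q2 \<in> V"
    and q2_neq: "q2 \<noteq> u" "q2 \<noteq> x1" "q2 \<noteq> v" "q2 \<noteq> p2" "q2 \<noteq> x2" "q2 \<noteq> y2" "q2 \<noteq> z"
    by (rule shortcut_grandparent[OF p2_z p2_y1])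
  note neq = nodes_neq q2_neq q2_neq[THEN not_sym] fresh_neq[OF fresh(1)] fresh_neq[OF fresh(2)]
    fresh_neq[OF fresh(3)] nodes_in_V q2_V fresh(4-6) fresh(4-6)[THEN not_sym]
  have v_y2: "(v, y2) \<notin> E" using neq child_v_unique by blast
  define R where "R = (\<lambda>c. 3 * rk c)(s := 3 * rk v + 1, t := 3 * rk x1 + 2, t2 := 3 * rk x1 + 1)"
  have R: "strict_rank R E" by (rule rank_scaled[of 3]) (use neq in \<open>auto simp: R_def\<close>)
  interpret m1: tail_move_setup X V E q2 p2 x2 z x1 v t
    by unfold_locales (use net q2_p2 parent_x2 p2_z edges fresh neq in auto)
  let ?V1 = "insert t V - {p2}" and ?E1 = "tail_moved_edges E q2 p2 x2 z x1 v t"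
  have R1: "strict_rank R ?E1"
    by (rule m1.strict_rank_result[OF R]) (use rank_order neq in \<open>auto simp: R_def\<close>)
  have net1: "phylo_net X ?V1 ?E1"
    using m1.phylo_net_result q2_z strict_rank_acyclic[OF R1] neq by simp
  interpret m2: tail_move_setup X ?V1 ?E1 t x2 y2 z v y1 s
    by unfold_locales (use net1 edges other_child_x2 neq in \<open>auto simp: tail_moved_edges_def\<close>)
  let ?V2 = "insert s ?V1 - {x2}" and ?E2 = "tail_moved_edges ?E1 t x2 y2 z v y1 s"
  have R2: "strict_rank R ?E2"
    by (rule m2.strict_rank_result[OF R1]) (use rank_order neq in \<open>auto simp: R_def\<close>)
  have "(t, z) \<notin> ?E1" using neq fresh_no_edge[OF fresh(2)] by (simp add: tail_moved_edges_def)
  then have net2: "phylo_net X ?V2 ?E2"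
    using m2.phylo_net_result strict_rank_acyclic[OF R2] neq by simp
  interpret m3: tail_move_setup X ?V2 ?E2 v s y1 y2 x1 t t2
    by unfold_locales (use net2 neq in \<open>auto simp: tail_moved_edges_def\<close>)
  let ?V3 = "insert t2 ?V2 - {s}" and ?E3 = "tail_moved_edges ?E2 v s y1 y2 x1 t t2"
  have R3: "strict_rank R ?E3"
    by (rule m3.strict_rank_result[OF R2]) (use rank_order neq in \<open>auto simp: R_def\<close>)
  have "(v, y2) \<notin> ?E2" using neq v_y2 by (simp add: tail_moved_edges_def)
  then have net3: "phylo_net X ?V3 ?E3"
    using m3.phylo_net_result strict_rank_acyclic[OF R3] neq by simp
  interpret m4: tail_move_setup X ?V3 ?E3 x1 t2 t y1 q2 z p2
    by unfold_locales (use net3 neq in \<open>auto simp: tail_moved_edges_def\<close>)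
  have V4: "insert p2 ?V3 - {t2} = transpose x2 t ` V" unfolding Eh_transposed(1)[OF fresh(2)] using neq by auto
  have E4: "tail_moved_edges ?E3 x1 t2 t y1 q2 z p2 = rename_edges (transpose x2 t) Eh"
    unfolding Eh_transposed(2)[OF fresh(2)]
    by (rule set_eq_by_cases[where S = "{(q2, p2), (p2, x2), (p2, z), (x1, v), (q2, z), (t, x2), (x1, t),
        (t, v), (x2, y2), (x2, z), (v, y1), (t, z), (s, y2), (v, s), (s, y1), (v, y2), (t2, y1), (x1, t2),
        (t2, t), (x1, y1), (p2, t)}"])
      (simp_all add: tail_moved_edges_def neq edges parent_x2 other_child_x2 p2_z q2_p2 q2_z v_y2
        fresh_no_edge[OF fresh(1)] fresh_no_edge[OF fresh(2)] fresh_no_edge[OF fresh(3)])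
  have "tail_move X ?V3 ?E3 t2 t q2 z p2 (transpose x2 t ` V) (rename_edges (transpose x2 t) Eh)"
    using m4.tail_move_result iso_Eh_transposed(2)[OF fresh(2)] unfolding V4 E4 by simp
  then show ?thesis
    using tail_stepI[OF m1.tail_move_result[OF net1]] tail_stepI[OF m2.tail_move_result[OF net2]]
      tail_stepI[OF m3.tail_move_result[OF net3]]
    by (auto simp: numeral_eq_Suc intro!: relpow_Suc_I2 tail_stepI)
qed

lemma tail_steps_to_result:
  assumes "infinite (UNIV :: 'v set)"
  shows "\<exists>k \<le> 4. \<exists>N''. ((V, E), N'') \<in> tail_step X ^^ k \<and> net_iso X N'' (V', E')"
proof -
  have fin: "finite V" using phylo_netD(1)[OF net] .
  obtain s where s: "s \<notin> V" using ex_new_if_finite[OF assms fin] by blast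
  obtain t where t: "t \<notin> insert s V" using ex_new_if_finite[OF assms] fin by (meson finite_insert)
  obtain t2 where t2: "t2 \<notin> insert t (insert s V)" using ex_new_if_finite[OF assms] fin by (meson finite_insert)
  consider "(p2, z) \<notin> E" | "(p2, z) \<in> E" "p2 = y1" | "(p2, z) \<in> E" "p2 \<noteq> y1" by blast
  then show ?thesis
  proof cases
    case 1
    then show ?thesis using tail_steps_no_shortcut s t iso_result by (intro exI[of _ 3]) auto
  next
    case 2
    then show ?thesis
      using tail_steps_shortcut_from_y1 t net_iso_trans[OF iso_Eh_transposed(1) iso_result]
      by (intro exI[of _ 2]) auto
  next
    case 3
    have "t \<notin> V" "t2 \<notin> V" "s \<noteq> t" "s \<noteq> t2" "t \<noteq> t2" using t t2 by auto
    with 3 show ?thesis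
      using tail_steps_shortcut[OF _ _ s] net_iso_trans[OF iso_Eh_transposed(1) iso_result]
      by (intro exI[of _ 4]) blast
  qed
qed

end

theorem mainTheorem7:
  fixes X V V' :: "'v set" and E E' :: "('v \<times> 'v) set"
  assumes "infinite (UNIV :: 'v set)"
    and "phylo_net X V E"
    and "head_move X V E u v x1 y1 x2 y2 v' V' E'"
    and "above E y1 x2" and "y1 \<noteq> x2"
    and "is_split V E x2"
  shows "\<exists>k \<le> 4. \<exists>N''. ((V, E), N'') \<in> (tail_step X) ^^ k \<and> net_iso X N'' (V', E')"
proof -
  obtain p2 where p2: "(y1, p2) \<in> E\<^sup>*" "(p2, x2) \<in> E"
    using assms(4,5) unfolding above_def by (auto elim: rtranclE)
  have x2_y2: "(x2, y2) \<in> E" and EV: "E \<subseteq> V \<times> V"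
    using assms(3) phylo_netD(2)[OF assms(2)] unfolding head_move_def by auto
  then have "card ({c \<in> V. (x2, c) \<in> E} - {y2}) = 1"
    using assms(6) unfolding is_split_def outdeg_def by (auto simp: card_Diff_singleton)
  then obtain z where "{c \<in> V. (x2, c) \<in> E} - {y2} = {z}" by (rule card_1_singletonE)
  then have "(x2, z) \<in> E" "z \<noteq> y2" by auto
  then interpret head_move_above X V E u v x1 y1 x2 y2 v' V' E' p2 z
    using assms(3) p2 by unfold_locales
  show ?thesis using tail_steps_to_result[OF assms(1)] .
qed

end
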